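(* Let $\mathcal{B}\in\mathbb{Z}^{n\times 2}$ have rank $2$ with rows $b_1,\dots,b_n$ summing to zero, and let $I_{\mathcal{B}}$ and $I$ be its lattice ideal and lattice basis ideal. Define $\alpha\in\mathbb{N}^n$ by $\alpha_i=\max_j\nu_{ij}$ if $b_{i1}>0$ and $\alpha_i=0$ otherwise. Then $\partial^{\alpha}I_{\mathcal{B}}\subseteq I$.
   Context: Work in the polynomial ring $\mathbb{C}[\partial_1,\dots,\partial_n]$. $\mathcal{B}=(b_{ji})$ with columns $b^{(1)},b^{(2)}$ and $L_{\mathcal{B}}=\mathcal{B}\mathbb{Z}^2$. For $u\in\mathbb{Z}^n$, $u=u_+-u_-$ with $u_\pm\in\mathbb{N}^n$ of disjoint supports. Lattice ideal: $I_{\mathcal{B}}=\langle\partial^{u_+}-\partial^{u_-}:u\in L_{\mathcal{B}}\rangle$. Lattice basis ideal: $I=\langle\partial^{b^{(1)}_+}-\partial^{b^{(1)}_-},\partial^{b^{(2)}_+}-\partial^{b^{(2)}_-}\rangle$. Index: $\nu_{ij}=\min(|b_{i1}b_{j2}|,|b_{j1}b_{i2}|)$ if $b_i,b_j$ lie in the interiors of opposite quadrants of $\mathbb{Z}^2$, and $0$ otherwise. *)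

theory Defs
  imports Complex_Main "HOL-Library.Poly_Mapping"
begin

text \<open>Polynomials in variables indexed by naturals (the variables d_0, ..., d_(n-1) are used),
  represented as finitely supported maps from exponent vectors to complex coefficients.\<close>
type_synonym cpoly = "(nat \<Rightarrow>\<^sub>0 nat) \<Rightarrow>\<^sub>0 complex"

definition dmono :: "(nat \<Rightarrow>\<^sub>0 nat) \<Rightarrow> cpoly" where
  "dmono u = Poly_Mapping.single u 1"

definition ideal_gen :: "cpoly set \<Rightarrow> cpoly set" where
  "ideal_gen G = {f. \<exists>S c. finite S \<and> S \<subseteq> G \<and> f = (\<Sum>g\<in>S. c g * g)}"

definition pos_part :: "nat \<Rightarrow> (nat \<Rightarrow> int) \<Rightarrow> (nat \<Rightarrow>\<^sub>0 nat)" where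
  "pos_part n u = Abs_poly_mapping (\<lambda>i. if i < n then nat (u i) else 0)"

definition neg_part :: "nat \<Rightarrow> (nat \<Rightarrow> int) \<Rightarrow> (nat \<Rightarrow>\<^sub>0 nat)" where
  "neg_part n u = Abs_poly_mapping (\<lambda>i. if i < n then nat (- u i) else 0)"

definition binom :: "nat \<Rightarrow> (nat \<Rightarrow> int) \<Rightarrow> cpoly" where
  "binom n u = dmono (pos_part n u) - dmono (neg_part n u)"

text \<open>Matrix B given by entries b i k, i < n (rows), k \<in> {0,1} (columns).
  Column k of B as a vector.\<close>
definition column :: "(nat \<Rightarrow> nat \<Rightarrow> int) \<Rightarrow> nat \<Rightarrow> (nat \<Rightarrow> int)" where
  "column b k = (\<lambda>i. b i k)"

definition lattice :: "(nat \<Rightarrow> nat \<Rightarrow> int) \<Rightarrow> (nat \<Rightarrow> int) set" where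
  "lattice b = {(\<lambda>i. p * b i 0 + q * b i 1) | p q. True}"

definition lattice_ideal :: "nat \<Rightarrow> (nat \<Rightarrow> nat \<Rightarrow> int) \<Rightarrow> cpoly set" where
  "lattice_ideal n b = ideal_gen {binom n u | u. u \<in> lattice b}"

definition lattice_basis_ideal :: "nat \<Rightarrow> (nat \<Rightarrow> nat \<Rightarrow> int) \<Rightarrow> cpoly set" where
  "lattice_basis_ideal n b = ideal_gen {binom n (column b 0), binom n (column b 1)}"

definition opposite_quadrants :: "(nat \<Rightarrow> nat \<Rightarrow> int) \<Rightarrow> nat \<Rightarrow> nat \<Rightarrow> bool" where
  "opposite_quadrants b i j \<longleftrightarrow>
     b i 0 \<noteq> 0 \<and> b i 1 \<noteq> 0 \<and> sgn (b j 0) = - sgn (b i 0) \<and> sgn (b j 1) = - sgn (b i 1)"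

definition nu :: "(nat \<Rightarrow> nat \<Rightarrow> int) \<Rightarrow> nat \<Rightarrow> nat \<Rightarrow> nat" where
  "nu b i j = (if opposite_quadrants b i j
               then nat (min \<bar>b i 0 * b j 1\<bar> \<bar>b j 0 * b i 1\<bar>) else 0)"

definition alpha :: "nat \<Rightarrow> (nat \<Rightarrow> nat \<Rightarrow> int) \<Rightarrow> (nat \<Rightarrow>\<^sub>0 nat)" where
  "alpha n b = Abs_poly_mapping
     (\<lambda>i. if i < n \<and> b i 0 > 0 then Max {nu b i j | j. j < n} else 0)"

end

(*
  Let u = p b(1) + q b(2) lie in L_B. To a lattice point x = (s, t) attach the monomial
  d^(alpha + u_+ - B x); at (0, 0) and at (p, q) it is d^alpha d^(u_+) and d^alpha d^(u_-).
  When two neighbouring lattice points both have nonnegative exponent vectors, the difference of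
  their monomials is a monomial multiple of a generator of I.  Hence d^alpha (d^(u_+) - d^(u_-))
  lies in I once (0, 0) and (p, q) are joined by a walk of unit steps through such admissible points.
  Reflecting and translating reduces this to p, q >= 0.  There the walk goes up while the rows of B
  in the open quadrant (-, +) allow it, and right otherwise; on a forced right step a row i in the
  quadrant (+, -) overshoots its bound by at most a product from the 2x2 minor of rows i and j, which
  is at most nu_ij <= alpha_i.
*)

theory Submission
  imports Defs
begin

interpretation ring_module: module "(*) :: 'a::comm_ring_1 \<Rightarrow> 'a \<Rightarrow> 'a"
  by unfold_locales (simp_all add: algebra_simps)

(* With multiplication as scaling, scale_scale is mult.assoc reversed and loops with algebra_simps. *)
declare ring_module.scale_scale [simp del]

lemma ideal_gen_eq_span: "ideal_gen G = ring_module.span G"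
  unfolding ideal_gen_def ring_module.span_explicit by blast

lemma mult_ideal_gen_subset:
  assumes "\<And>g. g \<in> G \<Longrightarrow> m * g \<in> ideal_gen H" and "f \<in> ideal_gen G"
  shows "m * f \<in> ideal_gen H"
  using assms(2) unfolding ideal_gen_eq_span
proof (induction rule: ring_module.span_induct_alt)
  case base
  show ?case by (simp add: ring_module.span_zero)
next
  case (step c g f)
  have "m * g \<in> ring_module.span H"
    using assms(1)[OF step.hyps(1)] unfolding ideal_gen_eq_span .
  from ring_module.span_add[OF ring_module.span_scale[OF this, of c] step.IH]
  show ?case by (simp add: algebra_simps)
qed

lemma lookup_pos_part: "Poly_Mapping.lookup (pos_part n u) i = (if i < n then nat (u i) else 0)"
proof -
  have "finite {i. (if i < n then nat (u i) else 0) \<noteq> 0}"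
    by (rule finite_subset[of _ "{..<n}"]) auto
  from lookup_Abs_poly_mapping[OF this] show ?thesis unfolding pos_part_def by simp
qed

lemma neg_part_eq_pos_part_uminus: "neg_part n u = pos_part n (\<lambda>i. - u i)"
  unfolding neg_part_def pos_part_def ..

lemma dmono_add: "dmono (u + v) = dmono u * dmono v"
  by (simp add: dmono_def mult_single)

lemma dmono_diff_eq_mult_binom:
  assumes "\<And>i. i < n \<Longrightarrow> g i = h i + w i"
    and "\<And>i. i < n \<Longrightarrow> 0 \<le> g i" and "\<And>i. i < n \<Longrightarrow> 0 \<le> h i"
  shows "dmono (pos_part n g) - dmono (pos_part n h)
       = dmono (pos_part n (\<lambda>i. min (g i) (h i))) * binom n w"
proof -
  have "nat (g i) = nat (min (g i) (h i)) + nat (w i)"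
    and "nat (h i) = nat (min (g i) (h i)) + nat (- w i)" if "i < n" for i
    using assms[OF that] by auto
  then have split_pos: "pos_part n g = pos_part n (\<lambda>i. min (g i) (h i)) + pos_part n w"
    and split_neg: "pos_part n h = pos_part n (\<lambda>i. min (g i) (h i)) + neg_part n w"
    by (auto intro!: poly_mapping_eqI simp: lookup_pos_part neg_part_eq_pos_part_uminus lookup_add)
  show ?thesis
    unfolding split_pos split_neg binom_def dmono_add by (simp add: right_diff_distrib)
qed

lemma lattice_basis_ideal_eq_span:
  "lattice_basis_ideal n b = ring_module.span {binom n (column b 0), binom n (column b 1)}"
  unfolding lattice_basis_ideal_def ideal_gen_eq_span ..

lemma step_monomials_diff_in_basis_ideal:
  assumes "k < 2" and "\<And>i. i < n \<Longrightarrow> g i = h i + b i k"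
    and "\<And>i. i < n \<Longrightarrow> 0 \<le> g i" and "\<And>i. i < n \<Longrightarrow> 0 \<le> h i"
  shows "dmono (pos_part n g) - dmono (pos_part n h) \<in> lattice_basis_ideal n b"
proof -
  have "binom n (column b k) \<in> {binom n (column b 0), binom n (column b 1)}"
    using assms(1) by (auto simp: less_2_cases_iff)
  then have "dmono (pos_part n (\<lambda>i. min (g i) (h i))) * binom n (column b k)
      \<in> lattice_basis_ideal n b"
    unfolding lattice_basis_ideal_eq_span by (intro ring_module.span_scale ring_module.span_base)
  with dmono_diff_eq_mult_binom[of n g h "column b k"] assms(2-4) show ?thesis
    by (simp add: column_def)
qed

(* The right step from (s, t) is forced because row (aj, cj) blocks the step up; row (ai, ci) then
   exceeds its bound by at most min (ai cj) (aj ci). *)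
lemma blocked_row_bound:
  fixes ai ci aj cj s t p q :: int
  assumes "0 < ai" "ci < 0" "aj < 0" "0 < cj" "0 \<le> t" "s + 1 \<le> p"
    and blocked: "max 0 (p * aj + q * cj) < s * aj + (t + 1) * cj"
  shows "(s + 1) * ai + t * ci \<le> min (ai * cj) (aj * ci) + max 0 (p * ai + q * ci)"
proof -
  define X where "X = (s + 1) * ai + t * ci"
  define Y where "Y = (s + 1) * aj + t * cj"
  define D where "D = ai * cj - aj * ci"
  have "Y = s * aj + (t + 1) * cj + aj - cj"
    unfolding Y_def by (simp add: algebra_simps)
  with blocked have Y_lower: "Y \<ge> max 0 (p * aj + q * cj) + 1 + aj - cj"
    by linarith
  \<comment> \<open>The only place where integrality is used.\<close>
  have corner: "0 \<le> (- aj - 1) * (cj - 1)"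
    using assms(3,4) by simp
  show ?thesis
  proof (cases "D \<le> 0")
    case True
    have "(- aj) * X = D * t - ai * Y"
      unfolding X_def Y_def D_def by (simp add: algebra_simps)
    also have "\<dots> \<le> - ai * Y"
      using True assms(5) by (simp add: mult_nonpos_nonneg)
    also have "\<dots> \<le> ai * (cj - aj - 1)"
    proof -
      have "ai * (max 0 (p * aj + q * cj) + 1 + aj - cj) \<le> ai * Y"
        using Y_lower assms(1) by simp
      moreover have "0 \<le> ai * max 0 (p * aj + q * cj)"
        using assms(1) by simp
      ultimately show ?thesis
        by (simp add: algebra_simps)
    qed
    also have "\<dots> \<le> (- aj) * (ai * cj)"
      using mult_nonneg_nonneg[OF _ corner, of ai] assms(1) by (simp add: algebra_simps)
    finally have "X \<le> ai * cj"
      using assms(3) by simp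
    moreover have "min (ai * cj) (aj * ci) = ai * cj"
      using True unfolding D_def by simp
    ultimately show ?thesis
      unfolding X_def by simp
  next
    case False
    have "cj * X = D * (s + 1) + ci * Y"
      unfolding X_def Y_def D_def by (simp add: algebra_simps)
    also have "\<dots> \<le> D * p + ci * Y"
      using False assms(6) by simp
    also have "\<dots> = cj * (p * ai + q * ci) + ci * (Y - (p * aj + q * cj))"
      unfolding D_def by (simp add: algebra_simps)
    also have "\<dots> \<le> cj * (p * ai + q * ci) + ci * (1 + aj - cj)"
      using Y_lower assms(2) by (simp add: mult_left_mono_neg)
    also have "\<dots> \<le> cj * (p * ai + q * ci) + cj * (aj * ci)"
      using mult_nonneg_nonneg[OF _ corner, of "- ci"] assms(2) by (simp add: algebra_simps)
    finally have "X \<le> p * ai + q * ci + aj * ci"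
      using assms(4) by (simp add: distrib_left[symmetric])
    moreover have "min (ai * cj) (aj * ci) = aj * ci"
      using False unfolding D_def by simp
    ultimately show ?thesis
      unfolding X_def by simp
  qed
qed

definition grid_adjacent :: "int \<times> int \<Rightarrow> int \<times> int \<Rightarrow> bool" where
  "grid_adjacent x y \<longleftrightarrow> \<bar>fst x - fst y\<bar> + \<bar>snd x - snd y\<bar> = 1"

definition grid_connected :: "(int \<times> int) set \<Rightarrow> int \<times> int \<Rightarrow> int \<times> int \<Rightarrow> bool" where
  "grid_connected R = (\<lambda>x y. x \<in> R \<and> y \<in> R \<and> grid_adjacent x y)\<^sup>*\<^sup>*"

lemma grid_connected_refl: "grid_connected R x x"
  unfolding grid_connected_def by simp

lemma grid_connected_step:
  "x \<in> R \<Longrightarrow> y \<in> R \<Longrightarrow> grid_adjacent x y \<Longrightarrow> grid_connected R y z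
    \<Longrightarrow> grid_connected R x z"
  unfolding grid_connected_def by (rule converse_rtranclp_into_rtranclp) auto

lemma grid_adjacent_sym: "grid_adjacent x y \<Longrightarrow> grid_adjacent y x"
  unfolding grid_adjacent_def by (simp add: abs_minus_commute)

lemma grid_adjacent_cases:
  assumes "grid_adjacent x y"
  obtains "y = (fst x + 1, snd x) \<or> y = (fst x, snd x + 1)"
    | "x = (fst y + 1, snd y) \<or> x = (fst y, snd y + 1)"
proof -
  have "fst y = fst x + 1 \<and> snd y = snd x \<or> fst y = fst x \<and> snd y = snd x + 1 \<or>
        fst x = fst y + 1 \<and> snd x = snd y \<or> fst x = fst y \<and> snd x = snd y + 1"
    using assms unfolding grid_adjacent_def by arith
  with that show ?thesis
    by (auto simp: prod_eq_iff)
qed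

lemma grid_connected_sym:
  assumes "grid_connected R x y"
  shows "grid_connected R y x"
proof -
  have "symp (\<lambda>x y. x \<in> R \<and> y \<in> R \<and> grid_adjacent x y)"
    by (rule sympI) (simp add: grid_adjacent_sym)
  from sympD[OF symp_rtranclp[OF this]] assms show ?thesis
    unfolding grid_connected_def .
qed

lemma grid_connected_image:
  assumes "grid_connected R x y"
    and "\<And>x y. grid_adjacent x y \<Longrightarrow> grid_adjacent (f x) (f y)" and "f ` R \<subseteq> R'"
  shows "grid_connected R' (f x) (f y)"
  using assms(1) unfolding grid_connected_def
proof (induction rule: rtranclp_induct)
  case base
  show ?case by simp
next
  case (step y z)
  then have "f y \<in> R'" "f z \<in> R'" "grid_adjacent (f y) (f z)"
    using assms(2,3) by auto
  with step.IH show ?case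
    by (auto intro: rtranclp.rtrancl_into_rtrancl)
qed

(* With a i = b i 0 and c i = b i 1, the point (s, t) is admissible iff the exponent vector
   beta + (B (p, q))_+ - B (s, t) of its walk_monomial below is nonnegative. *)
definition admissible_points ::
    "nat \<Rightarrow> (nat \<Rightarrow> int) \<Rightarrow> (nat \<Rightarrow> int) \<Rightarrow> (nat \<Rightarrow> int) \<Rightarrow> int \<Rightarrow> int
      \<Rightarrow> (int \<times> int) set" where
  "admissible_points n a c \<beta> p q =
     {(s, t). \<forall>i<n. s * a i + t * c i \<le> \<beta> i + max 0 (p * a i + q * c i)}"

locale walk_budget =
  fixes n :: nat and a c \<beta> :: "nat \<Rightarrow> int"
  assumes budget_nonneg: "\<And>i. i < n \<Longrightarrow> 0 \<le> \<beta> i"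
    and budget_bound: "\<And>i j. \<lbrakk>i < n; j < n; 0 < a i; a j < 0; c i * c j < 0\<rbrakk>
      \<Longrightarrow> min \<bar>a i * c j\<bar> \<bar>a j * c i\<bar> \<le> \<beta> i"

locale quadrant_walk = walk_budget +
  fixes p q :: int
  assumes target_nonneg: "0 \<le> p" "0 \<le> q"
begin

definition below_blocking_rows :: "int \<Rightarrow> int \<Rightarrow> bool" where
  "below_blocking_rows s t \<longleftrightarrow>
     (\<forall>j<n. a j < 0 \<longrightarrow> 0 < c j \<longrightarrow> s * a j + t * c j \<le> max 0 (p * a j + q * c j))"

lemma below_blocking_rows_target_column:
  assumes "t \<le> q"
  shows "below_blocking_rows p t"
proof -
  have "p * a j + t * c j \<le> max 0 (p * a j + q * c j)" if "0 < c j" for j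
    using mult_right_mono[OF assms, of "c j"] that by linarith
  then show ?thesis
    unfolding below_blocking_rows_def by blast
qed

lemma step_up_admissible:
  assumes "(s, t) \<in> admissible_points n a c \<beta> p q" "s \<le> p" "t < q"
    and "below_blocking_rows s (t + 1)"
  shows "(s, t + 1) \<in> admissible_points n a c \<beta> p q"
proof -
  have "s * a i + (t + 1) * c i \<le> \<beta> i + max 0 (p * a i + q * c i)" if "i < n" for i
  proof (cases "c i \<le> 0")
    case True
    with assms(1) that show ?thesis
      by (auto simp: admissible_points_def algebra_simps)
  next
    case False
    show ?thesis
    proof (cases "a i < 0")
      case True
      with False assms(4) that budget_nonneg[OF that] show ?thesis
        unfolding below_blocking_rows_def by fastforce
    next
      case False
      have "s * a i \<le> p * a i" "(t + 1) * c i \<le> q * c i"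
        using False \<open>\<not> c i \<le> 0\<close> assms(2,3) by (auto intro: mult_right_mono)
      with budget_nonneg[OF that] show ?thesis
        by linarith
    qed
  qed
  then show ?thesis
    by (simp add: admissible_points_def)
qed

lemma step_right_admissible:
  assumes "(s, t) \<in> admissible_points n a c \<beta> p q" "s < p" "0 \<le> t" "t \<le> q"
    and stuck: "\<not> (t < q \<and> below_blocking_rows s (t + 1))"
  shows "(s + 1, t) \<in> admissible_points n a c \<beta> p q"
proof -
  have "(s + 1) * a i + t * c i \<le> \<beta> i + max 0 (p * a i + q * c i)" if "i < n" for i
  proof (cases "a i \<le> 0")
    case True
    with assms(1) that show ?thesis
      by (auto simp: admissible_points_def algebra_simps)
  next
    case ai_pos: False
    have right: "(s + 1) * a i \<le> p * a i"
      using assms(2) ai_pos by (intro mult_right_mono) auto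
    show ?thesis
    proof (cases "0 \<le> c i \<or> t = q")
      case True
      then have "t * c i \<le> q * c i"
        using mult_right_mono[OF assms(4), of "c i"] by auto
      with right budget_nonneg[OF that] show ?thesis
        by linarith
    next
      case False
      with assms(4) stuck obtain j where j: "j < n" "a j < 0" "0 < c j"
        "max 0 (p * a j + q * c j) < s * a j + (t + 1) * c j"
        unfolding below_blocking_rows_def by (auto simp: not_le)
      have "(s + 1) * a i + t * c i \<le> min (a i * c j) (a j * c i) + max 0 (p * a i + q * c i)"
        using False ai_pos j assms(2,3) by (intro blocked_row_bound) auto
      moreover have "min (a i * c j) (a j * c i) \<le> \<beta> i"
      proof -
        have "0 < a i * c j" "0 < a j * c i" "c i * c j < 0"
          using False ai_pos j(2,3) by (simp_all add: mult_pos_pos mult_neg_neg mult_neg_pos)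
        with budget_bound[OF that j(1)] ai_pos j(2) show ?thesis
          by simp
      qed
      ultimately show ?thesis
        by linarith
    qed
  qed
  then show ?thesis
    by (simp add: admissible_points_def)
qed

lemma greedy_walk:
  assumes "(s, t) \<in> admissible_points n a c \<beta> p q" "s \<le> p" "0 \<le> t" "t \<le> q"
  shows "grid_connected (admissible_points n a c \<beta> p q) (s, t) (p, q)"
  using assms
proof (induction "nat (p - s + (q - t))" arbitrary: s t rule: less_induct)
  case less
  show ?case
  proof (cases "t < q \<and> below_blocking_rows s (t + 1)")
    case True
    then have up: "(s, t + 1) \<in> admissible_points n a c \<beta> p q"
      using less.prems by (intro step_up_admissible) auto
    have "grid_connected (admissible_points n a c \<beta> p q) (s, t + 1) (p, q)"
      by (rule less.hyps) (use up True less.prems in auto)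
    from grid_connected_step[OF less.prems(1) up _ this] show ?thesis
      by (simp add: grid_adjacent_def)
  next
    case stuck: False
    show ?thesis
    proof (cases "s < p")
      case True
      then have right: "(s + 1, t) \<in> admissible_points n a c \<beta> p q"
        using less.prems stuck by (intro step_right_admissible) auto
      have "grid_connected (admissible_points n a c \<beta> p q) (s + 1, t) (p, q)"
        by (rule less.hyps) (use right True less.prems in auto)
      from grid_connected_step[OF less.prems(1) right _ this] show ?thesis
        by (simp add: grid_adjacent_def)
    next
      case False
      with less.prems(2) have "s = p"
        by simp
      moreover have "t = q"
      proof (rule ccontr)
        assume "t \<noteq> q"
        with less.prems(4) have "t + 1 \<le> q"
          by simp
        with stuck \<open>s = p\<close> below_blocking_rows_target_column show False
          by simp
      qed
      ultimately show ?thesis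
        by (simp add: grid_connected_refl)
    qed
  qed
qed

lemma quadrant_walk_from_origin: "grid_connected (admissible_points n a c \<beta> p q) (0, 0) (p, q)"
  using budget_nonneg target_nonneg by (intro greedy_walk) (auto simp: admissible_points_def)

end

context walk_budget
begin

lemma half_plane_walk_from_origin:
  assumes "0 \<le> p"
  shows "grid_connected (admissible_points n a c \<beta> p q) (0, 0) (p, q)"
proof (cases "0 \<le> q")
  case True
  interpret quadrant_walk n a c \<beta> p q
    using assms True by unfold_locales
  show ?thesis
    by (rule quadrant_walk_from_origin)
next
  case False
  interpret reflected: quadrant_walk n a "\<lambda>i. - c i" \<beta> p "- q"
    using assms False budget_nonneg budget_bound by unfold_locales auto
  from reflected.quadrant_walk_from_origin
  have "grid_connected (admissible_points n a c \<beta> p q)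
      ((\<lambda>(s, t). (s, - t)) (0, 0)) ((\<lambda>(s, t). (s, - t)) (p, - q))"
    by (rule grid_connected_image) (auto simp: grid_adjacent_def admissible_points_def)
  then show ?thesis
    by simp
qed

lemma walk_from_origin: "grid_connected (admissible_points n a c \<beta> p q) (0, 0) (p, q)"
proof (cases "0 \<le> p")
  case True
  then show ?thesis
    by (rule half_plane_walk_from_origin)
next
  case False
  then have "grid_connected (admissible_points n a c \<beta> (- p) (- q)) (0, 0) (- p, - q)"
    by (intro half_plane_walk_from_origin) simp
  \<comment> \<open>Translation by (p, q) maps the admissible points for (-p, -q) into those for (p, q),
     because max 0 (- u) + u = max u 0.\<close>
  then have "grid_connected (admissible_points n a c \<beta> p q)
      ((\<lambda>(s, t). (s + p, t + q)) (0, 0)) ((\<lambda>(s, t). (s + p, t + q)) (- p, - q))"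
    by (rule grid_connected_image) (auto simp: grid_adjacent_def admissible_points_def algebra_simps)
  then show ?thesis
    by (simp add: grid_connected_sym)
qed

end

definition walk_monomial ::
    "nat \<Rightarrow> (nat \<Rightarrow> nat \<Rightarrow> int) \<Rightarrow> (nat \<Rightarrow> int) \<Rightarrow> int \<times> int \<Rightarrow> cpoly" where
  "walk_monomial n b K x = dmono (pos_part n (\<lambda>i. K i - (fst x * b i 0 + snd x * b i 1)))"

context
  fixes n :: nat and b :: "nat \<Rightarrow> nat \<Rightarrow> int" and K :: "nat \<Rightarrow> int"
    and R :: "(int \<times> int) set"
  assumes exponents_nonneg:
    "\<And>x i. x \<in> R \<Longrightarrow> i < n \<Longrightarrow> fst x * b i 0 + snd x * b i 1 \<le> K i"
begin

lemma unit_step_monomials_diff_in_basis_ideal: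
  assumes "x \<in> R" "y \<in> R" and unit_step: "y = (fst x + 1, snd x) \<or> y = (fst x, snd x + 1)"
  shows "walk_monomial n b K x - walk_monomial n b K y \<in> lattice_basis_ideal n b"
proof -
  obtain k :: nat where "k < 2"
    and "\<And>i. fst y * b i 0 + snd y * b i 1 = fst x * b i 0 + snd x * b i 1 + b i k"
  proof (cases "y = (fst x + 1, snd x)")
    case True
    then show ?thesis
      using that[of 0] by (simp add: algebra_simps)
  next
    case False
    with unit_step show ?thesis
      using that[of 1] by (auto simp: algebra_simps)
  qed
  moreover have "0 \<le> K i - (fst x * b i 0 + snd x * b i 1)"
    and "0 \<le> K i - (fst y * b i 0 + snd y * b i 1)" if "i < n" for i
    using exponents_nonneg[OF assms(1) that] exponents_nonneg[OF assms(2) that] by simp_all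
  ultimately show ?thesis
    unfolding walk_monomial_def by (intro step_monomials_diff_in_basis_ideal) simp_all
qed

lemma adjacent_monomials_diff_in_basis_ideal:
  assumes "x \<in> R" "y \<in> R" "grid_adjacent x y"
  shows "walk_monomial n b K x - walk_monomial n b K y \<in> lattice_basis_ideal n b"
  using assms(3)
proof (cases rule: grid_adjacent_cases)
  case 1
  with assms(1,2) show ?thesis
    by (rule unit_step_monomials_diff_in_basis_ideal)
next
  case 2
  with assms(2,1) have "walk_monomial n b K y - walk_monomial n b K x \<in> lattice_basis_ideal n b"
    by (rule unit_step_monomials_diff_in_basis_ideal)
  then show ?thesis
    unfolding lattice_basis_ideal_eq_span by (metis minus_diff_eq ring_module.span_neg)
qed

lemma connected_monomials_diff_in_basis_ideal:
  assumes "grid_connected R x y"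
  shows "walk_monomial n b K x - walk_monomial n b K y \<in> lattice_basis_ideal n b"
  using assms unfolding grid_connected_def
proof (induction rule: rtranclp_induct)
  case base
  show ?case
    by (simp add: lattice_basis_ideal_eq_span ring_module.span_zero)
next
  case (step y z)
  then have "walk_monomial n b K y - walk_monomial n b K z \<in> lattice_basis_ideal n b"
    by (intro adjacent_monomials_diff_in_basis_ideal) auto
  with step.IH have "(walk_monomial n b K x - walk_monomial n b K y)
      + (walk_monomial n b K y - walk_monomial n b K z) \<in> lattice_basis_ideal n b"
    unfolding lattice_basis_ideal_eq_span by (rule ring_module.span_add)
  then show ?case
    by simp
qed

end

lemma lookup_alpha:
  "Poly_Mapping.lookup (alpha n b) i = (if i < n \<and> 0 < b i 0 then Max {nu b i j | j. j < n} else 0)"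
proof -
  have "finite {i. (if i < n \<and> 0 < b i 0 then Max {nu b i j | j. j < n} else 0) \<noteq> 0}"
    by (rule finite_subset[of _ "{..<n}"]) auto
  from lookup_Abs_poly_mapping[OF this] show ?thesis
    unfolding alpha_def by simp
qed

lemma nu_le_alpha:
  assumes "i < n" "j < n" "0 < b i 0"
  shows "nu b i j \<le> Poly_Mapping.lookup (alpha n b) i"
proof -
  have "finite {nu b i j | j. j < n}"
    by (simp add: setcompr_eq_image)
  then have "nu b i j \<le> Max {nu b i j | j. j < n}"
    using assms(2) by (intro Max_ge) auto
  with assms show ?thesis
    by (simp add: lookup_alpha)
qed

lemma alpha_budget:
  assumes "i < n" "j < n" "0 < b i 0" "b j 0 < 0" "b i 1 * b j 1 < 0"
  shows "min \<bar>b i 0 * b j 1\<bar> \<bar>b j 0 * b i 1\<bar> \<le> int (Poly_Mapping.lookup (alpha n b) i)"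
proof -
  have "opposite_quadrants b i j"
    using assms(3-5) unfolding opposite_quadrants_def by (auto simp: mult_less_0_iff)
  then have "int (nu b i j) = min \<bar>b i 0 * b j 1\<bar> \<bar>b j 0 * b i 1\<bar>"
    unfolding nu_def by simp
  with nu_le_alpha[of i n j b] assms(1-3) show ?thesis
    by linarith
qed

lemma alpha_mult_binom_in_basis_ideal:
  assumes "u \<in> lattice b"
  shows "dmono (alpha n b) * binom n u \<in> lattice_basis_ideal n b"
proof -
  obtain p q where u: "u = (\<lambda>i. p * b i 0 + q * b i 1)"
    using assms unfolding lattice_def by blast
  define \<beta> where "\<beta> i = int (Poly_Mapping.lookup (alpha n b) i)" for i
  define K where "K i = \<beta> i + max 0 (u i)" for i
  define R where "R = admissible_points n (\<lambda>i. b i 0) (\<lambda>i. b i 1) \<beta> p q"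
  interpret walk_budget n "\<lambda>i. b i 0" "\<lambda>i. b i 1" \<beta>
  proof
    show "0 \<le> \<beta> i" for i
      by (simp add: \<beta>_def)
    show "min \<bar>b i 0 * b j 1\<bar> \<bar>b j 0 * b i 1\<bar> \<le> \<beta> i"
      if "i < n" "j < n" "0 < b i 0" "b j 0 < 0" "b i 1 * b j 1 < 0" for i j
      unfolding \<beta>_def using that by (rule alpha_budget)
  qed
  have nonneg: "fst x * b i 0 + snd x * b i 1 \<le> K i" if "x \<in> R" "i < n" for x i
    using that unfolding R_def K_def u admissible_points_def by auto
  have "walk_monomial n b K (0, 0) - walk_monomial n b K (p, q) \<in> lattice_basis_ideal n b"
    using connected_monomials_diff_in_basis_ideal[OF nonneg walk_from_origin[of p q, folded R_def]] .
  moreover have "pos_part n (\<lambda>i. K i - (0 * b i 0 + 0 * b i 1)) = alpha n b + pos_part n u"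
    and "pos_part n (\<lambda>i. K i - (p * b i 0 + q * b i 1)) = alpha n b + neg_part n u"
    by (auto intro!: poly_mapping_eqI
        simp: lookup_add lookup_pos_part neg_part_eq_pos_part_uminus lookup_alpha K_def \<beta>_def u)
  ultimately show ?thesis
    by (simp add: walk_monomial_def binom_def dmono_add right_diff_distrib)
qed

theorem proposition4p4:
  fixes n :: nat and b :: "nat \<Rightarrow> nat \<Rightarrow> int"
  assumes rank2: "\<exists>i j. i < n \<and> j < n \<and> b i 0 * b j 1 - b j 0 * b i 1 \<noteq> 0"
    and rows_sum_zero: "\<forall>k < 2. (\<Sum>i<n. b i k) = 0"
  shows "\<forall>f \<in> lattice_ideal n b. dmono (alpha n b) * f \<in> lattice_basis_ideal n b"
proof
  fix f
  assume "f \<in> lattice_ideal n b"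
  moreover have "dmono (alpha n b) * g \<in> lattice_basis_ideal n b"
    if "g \<in> {binom n u | u. u \<in> lattice b}" for g
    using that alpha_mult_binom_in_basis_ideal by blast
  ultimately show "dmono (alpha n b) * f \<in> lattice_basis_ideal n b"
    unfolding lattice_ideal_def lattice_basis_ideal_def by (rule mult_ideal_gen_subset[rotated])
qed

end
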